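(* Consider the self-attention dynamics with LayerNorm $X^{(t+1)}=D^{(t)}A^{(t)}X^{(t)}W_V^{(t)}$, where $\mathcal{G}$ is strongly connected, \textbf{A1} and \textbf{A2} hold, every $W_V^{(t)}\in\mathbb{R}^{d\times d}$ is orthogonal, and the initial input $X^{(0)}$ has rows in $\mathbb{S}^{d-1}$, $N\le d$, and full rank $N$. Then there exist constants $C_1,C_2>0$ such that $C_1\le D^{(t)}_{i,i}\le C_2$ for all $t\ge0$ and all $i\in[N]$.
   Context: Tokens are the rows of $X\in\mathbb{R}^{N\times d}$. Attention mask: directed graph $\mathcal{G}$ on $[N]$, $(j,i)\in E(\mathcal{G})$ meaning token $i$ attends to token $j$; $\mathcal{N}_i=\{k:(k,i)\in E(\mathcal{G})\}$. Masked softmax: $\mathrm{softmax}_{\mathcal{G}}(R)_{ij}=\exp(R_{ij})/\sum_{k\in\mathcal{N}_i}\exp(R_{ik})$ if $(j,i)\in E(\mathcal{G})$, else $0$. $A^{(t)}=\mathrm{softmax}_{\mathcal{G}}\big(X^{(t)}W_Q^{(t)}(X^{(t)}W_K^{(t)})^\top/\sqrt{d_{QK}}\big)$, $D^{(t)}=\mathrm{diag}(d_1,\dots,d_N)$ with $d_i=1/\|(A^{(t)}X^{(t)}W_V^{(t)})_{i,:}\|_2$. \textbf{A1}: $(i,i)\in E(\mathcal{G})$ for all $i$. \textbf{A2}: $\sup_t\max\{\|W_Q^{(t)}\|_2,\|W_K^{(t)}\|_2\}<\infty$. Strongly connected: any two distinct nodes are mutually reachable by directed paths. *)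

theory Defs
  imports "HOL-Analysis.Analysis"
begin

text \<open>Tokens are rows of X :: real^'d^'n (N = CARD('n) tokens, dimension d = CARD('d)).
  The mask graph is an edge set E on 'n; (j,i) \<in> E means token i attends to token j.\<close>

definition nbrs :: "('n \<times> 'n) set \<Rightarrow> 'n \<Rightarrow> 'n set" where
  "nbrs E i = {k. (k, i) \<in> E}"

definition masked_softmax :: "('n::finite \<times> 'n) set \<Rightarrow> real^'n^'n \<Rightarrow> real^'n^'n" where
  "masked_softmax E R = (\<chi> i j. if (j, i) \<in> E
      then exp (R $ i $ j) / (\<Sum>k\<in>nbrs E i. exp (R $ i $ k)) else 0)"

definition attn :: "('n::finite \<times> 'n) set \<Rightarrow> real^'q::finite^'d::finite \<Rightarrow> real^'q^'d
    \<Rightarrow> real^'d^'n \<Rightarrow> real^'n^'n" where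
  "attn E WQ WK X = masked_softmax E
     ((1 / sqrt (real CARD('q))) *\<^sub>R ((X ** WQ) ** transpose (X ** WK)))"

text \<open>LayerNorm coefficient d_i = 1 / || (A X W_V)_{i,:} ||_2 (the diagonal entry D_{i,i}).\<close>
definition ln_coef :: "('n::finite \<times> 'n) set \<Rightarrow> real^'q::finite^'d::finite \<Rightarrow> real^'q^'d
    \<Rightarrow> real^'d^'d \<Rightarrow> real^'d^'n \<Rightarrow> 'n \<Rightarrow> real" where
  "ln_coef E WQ WK WV X i = 1 / norm (((attn E WQ WK X ** X) ** WV) $ i)"

definition ln_step :: "('n::finite \<times> 'n) set \<Rightarrow> real^'q::finite^'d::finite \<Rightarrow> real^'q^'d
    \<Rightarrow> real^'d^'d \<Rightarrow> real^'d^'n \<Rightarrow> real^'d^'n" where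
  "ln_step E WQ WK WV X =
     (\<chi> i j. ln_coef E WQ WK WV X i * (((attn E WQ WK X ** X) ** WV) $ i $ j))"

definition strongly_connected :: "('n \<times> 'n) set \<Rightarrow> bool" where
  "strongly_connected E \<longleftrightarrow> (\<forall>i j. i \<noteq> j \<longrightarrow> (i, j) \<in> E\<^sup>+ \<and> (j, i) \<in> E\<^sup>+)"

end

theory Submission
  imports Defs
begin

text \<open>With unit rows and bounded \<open>W\<^sub>Q, W\<^sub>K\<close> the attention scores are bounded, so by \<open>A1\<close>
  every attention matrix \<open>A\<close> is row-stochastic with \<open>A\<^sub>i\<^sub>i \<ge> a\<close> for one fixed \<open>a > 0\<close>.
  By induction every iterate factors as \<open>X\<^sub>t = M X\<^sub>0 P\<close> with \<open>M\<close> entrywise nonnegative and \<open>P\<close>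
  orthogonal, and has unit rows. A row of \<open>A X\<^sub>t W\<^sub>V\<close> is a convex combination of unit vectors, so
  its norm is at most 1 and \<open>D\<^sub>i\<^sub>i \<ge> 1\<close>. Conversely, with \<open>s \<parallel>c\<parallel> \<le> \<parallel>c X\<^sub>0\<parallel> \<le> K \<parallel>c\<parallel>\<close> (the
  lower bound is where full rank enters), unit rows force \<open>\<parallel>M\<^sub>i\<parallel> \<ge> 1/K\<close>, nonnegativity gives
  \<open>\<parallel>(A M)\<^sub>i\<parallel> \<ge> A\<^sub>i\<^sub>i \<parallel>M\<^sub>i\<parallel> \<ge> a/K\<close>, hence \<open>\<parallel>(A X\<^sub>t)\<^sub>i\<parallel> \<ge> s a / K\<close> and \<open>D\<^sub>i\<^sub>i \<le> K / (s a)\<close>.\<close>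

lemma row_matrix_mult: "(A ** B) $ i = A $ i v* (B :: 'a::semiring_1^'c^'b)"
  by (simp add: vec_eq_iff matrix_matrix_mult_def vector_matrix_mult_def)

lemma vector_matrix_mult_as_sum: "x v* (M :: real^'c^'b) = (\<Sum>j\<in>UNIV. x $ j *\<^sub>R M $ j)"
  by (simp add: vec_eq_iff vector_matrix_mult_def sum_component)

lemma norm_vector_matrix_orthogonal:
  assumes "orthogonal_matrix (P :: real^'d^'d)"
  shows "norm (x v* P) = norm x"
proof -
  have "orthogonal_transformation ((*v) (transpose P))"
    using assms by (simp add: orthogonal_transformation_matrix matrix_vector_mul_linear)
  then show ?thesis
    by (simp add: orthogonal_transformation)
qed

lemma full_rank_vector_matrix_bounded_below:
  fixes X :: "real^'d^'n"
  assumes "rank X = CARD('n)"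
  obtains s where "s > 0" "\<And>c. s * norm c \<le> norm (c v* X)"
proof -
  have "rank (transpose X) = CARD('n)"
    using assms by (simp add: rank_transpose)
  then have "inj ((*v) (transpose X))"
    by (simp add: full_rank_injective)
  then obtain s where "s > 0" "\<And>c. s * norm c \<le> norm (transpose X *v c)"
    using linear_inj_bounded_below_pos[OF matrix_vector_mul_linear] by blast
  then show ?thesis
    using that by simp
qed

lemma vector_matrix_bounded_above:
  fixes X :: "real^'d^'n"
  obtains K where "K > 0" "\<And>c. norm (c v* X) \<le> K * norm c"
proof -
  obtain K where "K > 0" "\<And>c. norm (transpose X *v c) \<le> K * norm c"
    using linear_bounded_pos[OF matrix_vector_mul_linear] by blast
  then show ?thesis
    using that by simp
qed

lemma masked_softmax_nonneg: "masked_softmax E R $ i $ j \<ge> 0"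
  unfolding masked_softmax_def by (auto intro!: divide_nonneg_nonneg sum_nonneg)

lemma masked_softmax_row_sum:
  assumes "(i, i) \<in> E"
  shows "(\<Sum>j\<in>UNIV. masked_softmax E R $ i $ j) = 1"
proof -
  let ?S = "\<Sum>k\<in>nbrs E i. exp (R $ i $ k)"
  have "?S > 0"
    using assms by (intro sum_pos2[of _ i]) (auto simp: nbrs_def)
  have "(\<Sum>j\<in>UNIV. masked_softmax E R $ i $ j)
      = (\<Sum>j\<in>UNIV. if j \<in> nbrs E i then exp (R $ i $ j) / ?S else 0)"
    unfolding masked_softmax_def by (simp add: nbrs_def)
  also have "\<dots> = (\<Sum>j\<in>nbrs E i. exp (R $ i $ j)) / ?S"
    by (simp add: sum.inter_restrict[symmetric] flip: sum_divide_distrib)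
  also have "\<dots> = 1"
    using \<open>?S > 0\<close> by simp
  finally show ?thesis .
qed

lemma masked_softmax_diag_ge:
  fixes R :: "real^'n::finite^'n"
  assumes "(i, i) \<in> E" and bound: "\<And>k. \<bar>R $ i $ k\<bar> \<le> L"
  shows "exp (-2 * L) / real CARD('n) \<le> masked_softmax E R $ i $ i"
proof -
  let ?S = "\<Sum>k\<in>nbrs E i. exp (R $ i $ k)"
  have "?S > 0"
    using assms by (intro sum_pos2[of _ i]) (auto simp: nbrs_def)
  have "?S \<le> real (card (nbrs E i)) * exp L"
    using sum_mono[of "nbrs E i" "\<lambda>k. exp (R $ i $ k)" "\<lambda>_. exp L"] bound abs_le_D1 by auto
  also have "\<dots> \<le> real CARD('n) * exp L"
    by (simp add: card_mono)
  finally have "?S \<le> real CARD('n) * exp L" .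
  moreover have "exp (-L) \<le> exp (R $ i $ i)"
    using bound[of i] by simp
  ultimately have "exp (-L) / (real CARD('n) * exp L) \<le> exp (R $ i $ i) / ?S"
    using \<open>?S > 0\<close> by (intro frac_le) auto
  moreover have "exp (-2 * L) / real CARD('n) = exp (-L) / (real CARD('n) * exp L)"
    by (simp add: exp_minus field_simps flip: exp_add)
  ultimately show ?thesis
    using assms by (simp add: masked_softmax_def)
qed

lemma matrix_mult_entry_abs_le:
  fixes X :: "real^'d::finite^'n" and W :: "real^'q^'d"
  assumes "\<And>l. \<bar>X $ i $ l\<bar> \<le> 1" and "\<And>a b. \<bar>W $ a $ b\<bar> \<le> B"
  shows "\<bar>(X ** W) $ i $ k\<bar> \<le> real CARD('d) * B"
proof -
  have "\<bar>(X ** W) $ i $ k\<bar> \<le> (\<Sum>l\<in>UNIV. \<bar>X $ i $ l\<bar> * \<bar>W $ l $ k\<bar>)"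
    by (simp add: matrix_matrix_mult_def sum_abs flip: abs_mult)
  also have "\<dots> \<le> (\<Sum>l\<in>(UNIV::'d set). 1 * B)"
    using assms by (intro sum_mono mult_mono) auto
  finally show ?thesis by simp
qed

lemma attention_score_abs_le:
  fixes X :: "real^'d::finite^'n" and WQ WK :: "real^'q::finite^'d"
  assumes rows: "\<And>i. norm (X $ i) = 1"
    and WQ: "\<And>a b. \<bar>WQ $ a $ b\<bar> \<le> B" and WK: "\<And>a b. \<bar>WK $ a $ b\<bar> \<le> B"
  shows "\<bar>((1 / sqrt (real CARD('q))) *\<^sub>R ((X ** WQ) ** transpose (X ** WK))) $ i $ j\<bar>
           \<le> real CARD('q) * (real CARD('d) * B)^2"
proof -
  let ?c = "real CARD('d) * B"
  have entries: "\<And>i l. \<bar>X $ i $ l\<bar> \<le> 1"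
    using rows component_le_norm_cart by metis
  have "0 \<le> ?c"
    using WQ[of undefined undefined] by simp
  have "\<bar>(X ** WQ) $ i $ k * (X ** WK) $ j $ k\<bar> \<le> ?c^2" for k
    unfolding abs_mult power2_eq_square
    using \<open>0 \<le> ?c\<close> by (intro mult_mono matrix_mult_entry_abs_le entries WQ WK) auto
  then have "(\<Sum>k\<in>UNIV. \<bar>(X ** WQ) $ i $ k * (X ** WK) $ j $ k\<bar>) \<le> (\<Sum>k\<in>(UNIV::'q set). ?c^2)"
    by (rule sum_mono)
  then have score: "\<bar>\<Sum>k\<in>UNIV. (X ** WQ) $ i $ k * (X ** WK) $ j $ k\<bar> \<le> real CARD('q) * ?c^2"
    by (intro order_trans[OF sum_abs]) simp
  have "\<bar>((1 / sqrt (real CARD('q))) *\<^sub>R ((X ** WQ) ** transpose (X ** WK))) $ i $ j\<bar>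
      = (1 / sqrt (real CARD('q))) * \<bar>\<Sum>k\<in>UNIV. (X ** WQ) $ i $ k * (X ** WK) $ j $ k\<bar>"
    by (simp add: matrix_matrix_mult_def transpose_def abs_mult)
  also have "\<dots> \<le> 1 * (real CARD('q) * ?c^2)"
    by (intro mult_mono score) auto
  finally show ?thesis
    by simp
qed

lemma attn_diag_uniformly_positive:
  fixes E :: "('n::finite \<times> 'n) set"
  assumes "\<And>i. (i, i) \<in> E"
  obtains a where "a > 0"
    and "\<And>(WQ :: real^'q::finite^'d::finite) WK (X :: real^'d^'n) i.
           (\<And>a b. \<bar>WQ $ a $ b\<bar> \<le> B) \<Longrightarrow> (\<And>a b. \<bar>WK $ a $ b\<bar> \<le> B) \<Longrightarrow>
           (\<And>j. norm (X $ j) = 1) \<Longrightarrow> a \<le> attn E WQ WK X $ i $ i"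
proof
  show "exp (-2 * (real CARD('q) * (real CARD('d) * B)^2)) / real CARD('n) > 0"
    by simp
qed (unfold attn_def, intro masked_softmax_diag_ge attention_score_abs_le assms, auto)

definition row_stochastic :: "real^'n::finite^'m \<Rightarrow> bool" where
  "row_stochastic A \<longleftrightarrow> (\<forall>i j. 0 \<le> A $ i $ j) \<and> (\<forall>i. (\<Sum>j\<in>UNIV. A $ i $ j) = 1)"

lemma row_stochastic_attn:
  assumes "\<And>i. (i, i) \<in> E"
  shows "row_stochastic (attn E WQ WK X)"
  unfolding row_stochastic_def attn_def
  using masked_softmax_nonneg masked_softmax_row_sum assms by blast

lemma norm_row_stochastic_mult_le:
  fixes X :: "real^'d^'n::finite"
  assumes "row_stochastic A" and "\<And>j. norm (X $ j) \<le> 1"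
  shows "norm ((A ** X) $ i) \<le> 1"
proof -
  have "norm ((A ** X) $ i) \<le> (\<Sum>j\<in>UNIV. norm (A $ i $ j *\<^sub>R X $ j))"
    unfolding row_matrix_mult vector_matrix_mult_as_sum by (rule norm_sum)
  also have "\<dots> \<le> (\<Sum>j\<in>UNIV. A $ i $ j)"
    using assms by (intro sum_mono) (auto simp: row_stochastic_def mult_left_le)
  also have "\<dots> = 1"
    using assms(1) by (simp add: row_stochastic_def)
  finally show ?thesis .
qed

lemma norm_row_nonneg_mult_ge:
  fixes A M :: "real^'n::finite^'n"
  assumes "\<And>i j. 0 \<le> A $ i $ j" and "\<And>i j. 0 \<le> M $ i $ j"
  shows "A $ i $ i * norm (M $ i) \<le> norm ((A ** M) $ i)"
proof -
  have "norm (A $ i $ i *\<^sub>R M $ i) \<le> norm ((A ** M) $ i)"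
  proof (rule norm_le_componentwise_cart)
    fix k
    have "A $ i $ i * M $ i $ k \<le> (\<Sum>j\<in>UNIV. A $ i $ j * M $ j $ k)"
      using assms by (intro member_le_sum) auto
    then show "norm ((A $ i $ i *\<^sub>R M $ i) $ k) \<le> norm ((A ** M) $ i $ k)"
      using assms by (simp add: matrix_matrix_mult_def)
  qed
  then show ?thesis
    using assms by simp
qed

definition nonneg_mix_rotation :: "real^'d^'n \<Rightarrow> real^'d^'n \<Rightarrow> bool" where
  "nonneg_mix_rotation X0 X \<longleftrightarrow>
     (\<exists>M P. X = (M ** X0) ** P \<and> (\<forall>i j. 0 \<le> M $ i $ j) \<and> orthogonal_matrix P)"

lemma nonneg_mix_rotation_refl: "nonneg_mix_rotation X0 X0"
proof -
  have "X0 = (mat 1 ** X0) ** mat 1"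
    by simp
  moreover have "\<forall>i j. 0 \<le> (mat 1 :: real^'n^'n) $ i $ j"
    by (simp add: mat_def)
  ultimately show ?thesis
    unfolding nonneg_mix_rotation_def using orthogonal_matrix_id by blast
qed

lemma norm_nonneg_mult_mix_rotation_ge:
  fixes A :: "real^'n::finite^'n" and X X0 :: "real^'d::finite^'n"
  assumes A: "\<And>i j. 0 \<le> A $ i $ j" "a \<le> A $ i $ i" "0 \<le> a"
    and X: "nonneg_mix_rotation X0 X" "\<And>j. norm (X $ j) = 1"
    and s: "s > 0" "\<And>c. s * norm c \<le> norm (c v* X0)"
    and K: "K > 0" "\<And>c. norm (c v* X0) \<le> K * norm c"
  shows "s * a / K \<le> norm ((A ** X) $ i)"
proof -
  obtain M P where XM: "X = (M ** X0) ** P" and M: "\<And>i j. 0 \<le> M $ i $ j"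
    and P: "orthogonal_matrix P"
    using X(1) unfolding nonneg_mix_rotation_def by blast
  have "1 = norm (M $ i v* X0)"
    using X(2)[of i] by (simp add: XM row_matrix_mult norm_vector_matrix_orthogonal[OF P])
  also have "\<dots> \<le> K * norm (M $ i)"
    by (rule K(2))
  finally have "1 / K \<le> norm (M $ i)"
    using K(1) by (simp add: field_simps)
  then have "a * (1 / K) \<le> A $ i $ i * norm (M $ i)"
    using A K(1) by (intro mult_mono) auto
  then have "s * (a / K) \<le> s * (A $ i $ i * norm (M $ i))"
    using s(1) by (intro mult_left_mono) auto
  then have "s * a / K \<le> s * (A $ i $ i * norm (M $ i))"
    by simp
  also have "\<dots> \<le> s * norm ((A ** M) $ i)"
    using s(1) norm_row_nonneg_mult_ge[OF A(1) M] by simp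
  also have "\<dots> \<le> norm ((A ** M) $ i v* X0)"
    by (rule s(2))
  also have "\<dots> = norm ((A ** X) $ i)"
    by (simp add: XM matrix_mul_assoc row_matrix_mult norm_vector_matrix_orthogonal[OF P])
  finally show ?thesis .
qed

lemma row_scaling_matrix_mult:
  "(\<chi> i j. d i * (Z ** Q) $ i $ j) = (\<chi> i j. d i * Z $ i $ j) ** (Q :: real^'c^'b)"
  by (simp add: vec_eq_iff matrix_matrix_mult_def sum_distrib_left mult.assoc)

lemma ln_step_row:
  "ln_step E WQ WK WV X $ i
     = ln_coef E WQ WK WV X i *\<^sub>R ((attn E WQ WK X ** X) ** WV) $ i"
  by (simp add: ln_step_def vec_eq_iff)

lemma ln_step_unit_rows:
  assumes "ln_coef E WQ WK WV X i \<noteq> 0"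
  shows "norm (ln_step E WQ WK WV X $ i) = 1"
  using assms by (simp add: ln_step_row ln_coef_def)

lemma nonneg_mix_rotation_ln_step:
  fixes X X0 :: "real^'d::finite^'n::finite"
  assumes "nonneg_mix_rotation X0 X" and "orthogonal_matrix WV"
  shows "nonneg_mix_rotation X0 (ln_step E WQ WK WV X)"
proof -
  obtain M P where XM: "X = (M ** X0) ** P" and M: "\<And>i j. 0 \<le> M $ i $ j"
    and P: "orthogonal_matrix P"
    using assms(1) unfolding nonneg_mix_rotation_def by blast
  define A where "A = attn E WQ WK X"
  define D :: "real^'n^'n" where "D = (\<chi> i j. ln_coef E WQ WK WV X i * (A ** M) $ i $ j)"
  have "(A ** X) ** WV = ((A ** M) ** X0) ** (P ** WV)"
    by (simp add: XM matrix_mul_assoc)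
  then have "ln_step E WQ WK WV X = (D ** X0) ** (P ** WV)"
    unfolding ln_step_def D_def A_def by (simp add: row_scaling_matrix_mult)
  moreover have "0 \<le> D $ i $ j" for i j
  proof -
    have "\<And>k. 0 \<le> A $ i $ k"
      unfolding A_def attn_def by (rule masked_softmax_nonneg)
    then have "0 \<le> (A ** M) $ i $ j"
      using M by (simp add: matrix_matrix_mult_def sum_nonneg)
    then show ?thesis
      by (simp add: D_def ln_coef_def)
  qed
  ultimately show ?thesis
    using orthogonal_matrix_mul[OF P assms(2)] unfolding nonneg_mix_rotation_def by blast
qed

lemma ln_coef_bounds:
  fixes X X0 :: "real^'d::finite^'n::finite"
  assumes A: "row_stochastic (attn E WQ WK X)" "a \<le> attn E WQ WK X $ i $ i" "a > 0"
    and X: "nonneg_mix_rotation X0 X" "\<And>j. norm (X $ j) = 1"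
    and WV: "orthogonal_matrix WV"
    and s: "s > 0" "\<And>c. s * norm c \<le> norm (c v* X0)"
    and K: "K > 0" "\<And>c. norm (c v* X0) \<le> K * norm c"
  shows "1 \<le> ln_coef E WQ WK WV X i \<and> ln_coef E WQ WK WV X i \<le> K / (s * a)"
proof -
  define n where "n = norm (((attn E WQ WK X ** X) ** WV) $ i)"
  have n_eq: "n = norm ((attn E WQ WK X ** X) $ i)"
    by (simp add: n_def row_matrix_mult norm_vector_matrix_orthogonal[OF WV])
  have upper: "n \<le> 1"
    unfolding n_eq by (rule norm_row_stochastic_mult_le[OF A(1)]) (simp add: X(2))
  have "\<And>i j. 0 \<le> attn E WQ WK X $ i $ j"
    using A(1) by (simp add: row_stochastic_def)
  then have lower: "s * a / K \<le> n"
    unfolding n_eq using norm_nonneg_mult_mix_rotation_ge[OF _ A(2) _ X s K] A(3) by simp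
  have "s * a / K > 0"
    using A(3) s(1) K(1) by simp
  then have "n > 0"
    using lower by linarith
  have "1 \<le> 1 / n"
    using upper \<open>n > 0\<close> by simp
  moreover have "1 / n \<le> 1 / (s * a / K)"
    using lower mult_pos_pos[OF \<open>n > 0\<close> \<open>s * a / K > 0\<close>] by (intro divide_left_mono) simp_all
  ultimately show ?thesis
    unfolding ln_coef_def n_def[symmetric] by simp
qed

theorem mainTheorem6:
  fixes E :: "('n::finite \<times> 'n) set"
    and X :: "nat \<Rightarrow> real^'d::finite^'n"
    and WQ WK :: "nat \<Rightarrow> real^'q::finite^'d"
    and WV :: "nat \<Rightarrow> real^'d^'d"
  assumes sc: "strongly_connected E"
    and A1: "\<forall>i. (i, i) \<in> E"
    and A2: "\<exists>B. \<forall>t. onorm ((*v) (WQ t)) \<le> B \<and> onorm ((*v) (WK t)) \<le> B"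
    and orth: "\<forall>t. orthogonal_matrix (WV t)"
    and sphere: "\<forall>i. norm (X 0 $ i) = 1"
    and Nd: "CARD('n) \<le> CARD('d)"
    and fullrank: "rank (X 0) = CARD('n)"
    and dyn: "\<forall>t. X (Suc t) = ln_step E (WQ t) (WK t) (WV t) (X t)"
  shows "\<exists>C1 C2. C1 > 0 \<and> C2 > 0 \<and>
           (\<forall>t i. C1 \<le> ln_coef E (WQ t) (WK t) (WV t) (X t) i
                 \<and> ln_coef E (WQ t) (WK t) (WV t) (X t) i \<le> C2)"
proof -
  obtain B where "\<And>t. onorm ((*v) (WQ t)) \<le> B \<and> onorm ((*v) (WK t)) \<le> B"
    using A2 by blast
  then have WQ: "\<And>t a b. \<bar>WQ t $ a $ b\<bar> \<le> B" and WK: "\<And>t a b. \<bar>WK t $ a $ b\<bar> \<le> B"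
    using matrix_component_le_onorm order_trans by blast+
  obtain a where a: "a > 0" and diag: "\<And>t X i. (\<And>j. norm (X $ j) = 1) \<Longrightarrow>
      a \<le> attn E (WQ t) (WK t) X $ i $ i"
    using attn_diag_uniformly_positive[of E B] A1 WQ WK by metis
  obtain s where s: "s > 0" "\<And>c. s * norm c \<le> norm (c v* X 0)"
    using full_rank_vector_matrix_bounded_below[OF fullrank] by blast
  obtain K where K: "K > 0" "\<And>c. norm (c v* X 0) \<le> K * norm c"
    using vector_matrix_bounded_above by blast
  have bounds: "1 \<le> ln_coef E (WQ t) (WK t) (WV t) (X t) i
      \<and> ln_coef E (WQ t) (WK t) (WV t) (X t) i \<le> K / (s * a)"
    if "nonneg_mix_rotation (X 0) (X t)" "\<And>j. norm (X t $ j) = 1" for t i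
    using ln_coef_bounds[OF row_stochastic_attn diag a that _ s K] A1 orth that(2) by blast
  have invariant: "nonneg_mix_rotation (X 0) (X t) \<and> (\<forall>j. norm (X t $ j) = 1)" for t
  proof (induction t)
    case 0
    show ?case using sphere nonneg_mix_rotation_refl by blast
  next
    case (Suc t)
    then have "1 \<le> ln_coef E (WQ t) (WK t) (WV t) (X t) j" for j
      using bounds by blast
    then have "norm (ln_step E (WQ t) (WK t) (WV t) (X t) $ j) = 1" for j
      by (metis ln_step_unit_rows not_one_le_zero)
    moreover have "nonneg_mix_rotation (X 0) (ln_step E (WQ t) (WK t) (WV t) (X t))"
      using Suc orth nonneg_mix_rotation_ln_step by blast
    ultimately show ?case
      using dyn by simp
  qed
  show ?thesis
    using bounds invariant a s K by (intro exI[of _ 1] exI[of _ "K / (s * a)"]) auto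
qed

end
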